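(* For every CCCP configuration $\mathcal C$: if $\mathcal C\xrightarrow{\sigma}W_1$ for some $W_1$, then for $\lambda=\tau$ and for every $\lambda=c!v$ (any channel $c$, closed value $v$) there is no $W_2$ with $\mathcal C\xrightarrow{\lambda}W_2$.
   Context: CCCP syntax. Fix a set of channels (ranged over by $c,d$) and a set of values containing data variables $x,y$ and a special error value $\mathtt{err}$; closed values $v,w$ contain no variables, and each closed value $v$ has a transmission time $\delta_v\in\mathbb{N}$ with $\delta_v\ge 1$. Expressions $e$ are built from values; closed expressions evaluate to closed values via $[\![e]\!]$. Station code (processes) is given by $P,Q ::= c!\langle e\rangle.P \mid \lfloor ?c(x).P\rfloor Q \mid \sigma.P \mid \tau.P \mid P+Q \mid [b]P,Q \mid X \mid \mathbf{0} \mid \mathrm{fix}\,X.P$, where $b$ is either $e_1=e_2$ or $\mathrm{exp}(c)$, $[b]P,Q$ is a conditional (then-branch $P$, else-branch $Q$), $\lfloor ?c(x).P\rfloor Q$ is a receiver on $c$ with timeout branch $Q$ ($x$ bound in $P$), $\sigma.P$ is a one-unit delay and $\sigma^n.P$ denotes $n$ nested delays. System terms are $W ::= P \mid \lfloor ?c(x).P\rfloor \mid W_1|W_2 \mid \nu c{:}(n,v).W$, where $\lfloor ?c(x).P\rfloor$ is an active receiver ($x$ bound in $P$) and $\nu c{:}(n,v).W$ restricts $c$ with local channel state $(n,v)$. In $\mathrm{fix}\,X.P$ every occurrence of $X$ in $P$ is guarded, i.e. lies within a broadcast prefix, a receiver continuation, a timeout branch, a $\sigma$-prefix, or a branch of a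 conditional. Terms are identified up to $\alpha$-conversion. A channel environment is a map $\Gamma$ from channels to $\mathbb{N}\times$(closed values); write $\Gamma\vdash_t c:n$ and $\Gamma\vdash_v c:w$ when $\Gamma(c)=(n,w)$; $c$ is idle in $\Gamma$ if $\Gamma\vdash_t c:0$ and exposed otherwise; $\Gamma[c\mapsto(n,v)]$ is $\Gamma$ updated at $c$; $\Gamma\le\Gamma'$ iff for every $c$, $\Gamma\vdash_t c:n$ and $\Gamma'\vdash_t c:m$ imply $n\le m$. A configuration $\Gamma\triangleright W$ is a channel environment together with a closed system term (no free data or process variables). Intensional semantics. Actions $\lambda$ are $c!v$, $c?v$, $\sigma$, $\tau$. The environment update $\lambda(\Gamma)$ is: $\sigma(\Gamma)(c)=(\max(n-1,0),w)$ whenever $\Gamma(c)=(n,w)$; $c!v(\Gamma)$ agrees with $\Gamma$ except at $c$, where it is $(\delta_v,v)$ if $c$ is idle in $\Gamma$ and $(\max(\delta_v,n),\mathtt{err})$ if $\Gamma\vdash_t c:n>0$; $c?v(\Gamma)=c!v(\Gamma)$; $\tau(\Gamma)=\Gamma$. The predicate $\mathrm{rcv}(W,c)$ on terms is: true for $\lfloor ?d(x).P\rfloor Q$ iff $d=c$; $\mathrm{rcv}(P+Q,c)=\mathrm{rcv}(P,c)\vee\mathrm{rcv}(Q,c)$; $\mathrm{rcv}(\mathrm{fix}\,X.P,c)=\mathrm{rcv}(P,c)$; $\mathrm{rcv}(W_1|W_2,c)=\mathrm{rcv}(W_1,c)\vee\mathrm{rcv}(W_2,c)$; $\mathrm{rcv}(\nu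 d{:}(n,v).W,c)=\mathrm{rcv}(W,c)$ (with $d\neq c$ by $\alpha$-conversion); false for all other forms (broadcasts, $\tau.P$, $\sigma.P$, conditionals, $X$, $\mathbf 0$, active receivers). Then $\mathrm{rcv}(\Gamma\triangleright W,c)$ holds iff $c$ is idle in $\Gamma$ and $\mathrm{rcv}(W,c)$. Transitions $\Gamma\triangleright W\xrightarrow{\lambda}W'$ are the least relation closed under: (Snd) $[\![e]\!]=v$ implies $\Gamma\triangleright c!\langle e\rangle.P\xrightarrow{c!v}\sigma^{\delta_v}.P$; (Rcv) $c$ idle in $\Gamma$ implies $\Gamma\triangleright\lfloor ?c(x).P\rfloor Q\xrightarrow{c?v}\lfloor ?c(x).P\rfloor$; (RcvIgn) $\neg\mathrm{rcv}(\Gamma\triangleright W,c)$ implies $\Gamma\triangleright W\xrightarrow{c?v}W$; (Sync) $\Gamma\triangleright W_1\xrightarrow{c!v}W_1'$ and $\Gamma\triangleright W_2\xrightarrow{c?v}W_2'$ imply $\Gamma\triangleright W_1|W_2\xrightarrow{c!v}W_1'|W_2'$, and symmetrically; (RcvPar) $\Gamma\triangleright W_i\xrightarrow{c?v}W_i'$ for $i=1,2$ imply $\Gamma\triangleright W_1|W_2\xrightarrow{c?v}W_1'|W_2'$; (TimeNil) $\Gamma\triangleright\mathbf 0\xrightarrow{\sigma}\mathbf 0$; (Sleep) $\Gamma\triangleright\sigma.P\xrightarrow{\sigma}P$; (ActRcv) $\Gamma\vdash_t c:n$, $n>1$ imply $\Gamma\triangleright\lfloor ?c(x).P\rfloor\xrightarrow{\sigma}\lfloor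 ?c(x).P\rfloor$; (EndRcv) $\Gamma\vdash_t c:1$, $\Gamma\vdash_v c:w$ imply $\Gamma\triangleright\lfloor ?c(x).P\rfloor\xrightarrow{\sigma}\{w/x\}P$; (Timeout) $c$ idle in $\Gamma$ implies $\Gamma\triangleright\lfloor ?c(x).P\rfloor Q\xrightarrow{\sigma}Q$; (RcvLate) $c$ exposed in $\Gamma$ implies $\Gamma\triangleright\lfloor ?c(x).P\rfloor Q\xrightarrow{\tau}\lfloor ?c(x).\{\mathtt{err}/x\}P\rfloor$; (Tau) $\Gamma\triangleright\tau.P\xrightarrow{\tau}P$; (Then)/(Else) $\Gamma\triangleright[b]P,Q\xrightarrow{\tau}\sigma.P$ if $[\![b]\!]_\Gamma$ is true and $\xrightarrow{\tau}\sigma.Q$ otherwise, where $[\![e_1=e_2]\!]_\Gamma$ is true iff $[\![e_1]\!]=[\![e_2]\!]$ and $[\![\mathrm{exp}(c)]\!]_\Gamma$ is true iff $c$ is exposed in $\Gamma$; (TimePar) $\Gamma\triangleright W_i\xrightarrow{\sigma}W_i'$ for $i=1,2$ imply $\Gamma\triangleright W_1|W_2\xrightarrow{\sigma}W_1'|W_2'$; (TauPar) $\Gamma\triangleright W_1\xrightarrow{\tau}W_1'$ implies $\Gamma\triangleright W_1|W_2\xrightarrow{\tau}W_1'|W_2$, and symmetrically; (Rec) $\Gamma\triangleright\{\mathrm{fix}\,X.P/X\}P\xrightarrow{\lambda}W$ implies $\Gamma\triangleright\mathrm{fix}\,X.P\xrightarrow{\lambda}W$; (Sum) for $\lambda\in\{\tau,c!v\}$,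 $\Gamma\triangleright P\xrightarrow{\lambda}W$ implies $\Gamma\triangleright P+Q\xrightarrow{\lambda}W$, and symmetrically; (SumTime) $\Gamma\triangleright P\xrightarrow{\sigma}P'$, $\Gamma\triangleright Q\xrightarrow{\sigma}Q'$ imply $\Gamma\triangleright P+Q\xrightarrow{\sigma}P'+Q'$; (SumRcv) $\Gamma\triangleright P\xrightarrow{c?v}W$ and $\mathrm{rcv}(\Gamma\triangleright P,c)$ imply $\Gamma\triangleright P+Q\xrightarrow{c?v}W$, and symmetrically; (ResI) $\Gamma[c\mapsto(n,v)]\triangleright W\xrightarrow{c!w}W'$ implies $\Gamma\triangleright\nu c{:}(n,v).W\xrightarrow{\tau}\nu c{:}(c!w(\Gamma[c\mapsto(n,v)]))(c).W'$; (ResV) $\Gamma[c\mapsto(n,v)]\triangleright W\xrightarrow{\lambda}W'$ with $c$ not occurring in $\lambda$ implies $\Gamma\triangleright\nu c{:}(n,v).W\xrightarrow{\lambda}\nu c{:}(\lambda(\Gamma[c\mapsto(n,v)]))(c).W'$. *)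

theory Defs
  imports Main
begin

type_synonym var = string
type_synonym pvar = string

datatype 'a cval = CErr | CBase 'a

datatype 'a val = VVar var | VC "'a cval"

datatype ('a,'f) expr = EVal "'a val" | EOp 'f "('a,'f) expr list"

datatype ('c,'a,'f) bexp = BEq "('a,'f) expr" "('a,'f) expr" | BExp 'c

datatype ('c,'a,'f) proc =
    PSnd 'c "('a,'f) expr" "('c,'a,'f) proc"
  | PRcv 'c var "('c,'a,'f) proc" "('c,'a,'f) proc"                 \<comment> \<open>|?c(x).P|Q\<close>
  | PSleep "('c,'a,'f) proc"
  | PTau "('c,'a,'f) proc"
  | PSum "('c,'a,'f) proc" "('c,'a,'f) proc"
  | PCond "('c,'a,'f) bexp" "('c,'a,'f) proc" "('c,'a,'f) proc"     \<comment> \<open>[b]P,Q\<close>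
  | PVar pvar
  | PNil
  | PFix pvar "('c,'a,'f) proc"

datatype ('c,'a,'f) sys =
    SProc "('c,'a,'f) proc"
  | SActRcv 'c var "('c,'a,'f) proc"
  | SPar "('c,'a,'f) sys" "('c,'a,'f) sys"
  | SRes 'c nat "'a cval" "('c,'a,'f) sys"                          \<comment> \<open>nu c:(n,v).W\<close>

datatype ('c,'a) label = LOut 'c "'a cval" | LIn 'c "'a cval" | LSigma | LTau

type_synonym ('c,'a) env = "'c \<Rightarrow> nat \<times> 'a cval"

fun sigmas :: "nat \<Rightarrow> ('c,'a,'f) proc \<Rightarrow> ('c,'a,'f) proc" where
  "sigmas 0 P = P"
| "sigmas (Suc n) P = PSleep (sigmas n P)"

fun eval :: "('f \<Rightarrow> 'a cval list \<Rightarrow> 'a cval) \<Rightarrow> ('a,'f) expr \<Rightarrow> 'a cval option" where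
  "eval I (EVal (VVar x)) = None"
| "eval I (EVal (VC v)) = Some v"
| "eval I (EOp f es) =
     (if None \<in> set (map (eval I) es) then None else Some (I f (map (the \<circ> eval I) es)))"

fun fv_e :: "('a,'f) expr \<Rightarrow> var set" where
  "fv_e (EVal (VVar x)) = {x}"
| "fv_e (EVal (VC v)) = {}"
| "fv_e (EOp f es) = \<Union> (set (map fv_e es))"

fun fv_b :: "('c,'a,'f) bexp \<Rightarrow> var set" where
  "fv_b (BEq e1 e2) = fv_e e1 \<union> fv_e e2"
| "fv_b (BExp c) = {}"

fun fv_p :: "('c,'a,'f) proc \<Rightarrow> var set" where
  "fv_p (PSnd c e P) = fv_e e \<union> fv_p P"
| "fv_p (PRcv c x P Q) = (fv_p P - {x}) \<union> fv_p Q"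
| "fv_p (PSleep P) = fv_p P"
| "fv_p (PTau P) = fv_p P"
| "fv_p (PSum P Q) = fv_p P \<union> fv_p Q"
| "fv_p (PCond b P Q) = fv_b b \<union> fv_p P \<union> fv_p Q"
| "fv_p (PVar X) = {}"
| "fv_p PNil = {}"
| "fv_p (PFix X P) = fv_p P"

fun fpv_p :: "('c,'a,'f) proc \<Rightarrow> pvar set" where
  "fpv_p (PSnd c e P) = fpv_p P"
| "fpv_p (PRcv c x P Q) = fpv_p P \<union> fpv_p Q"
| "fpv_p (PSleep P) = fpv_p P"
| "fpv_p (PTau P) = fpv_p P"
| "fpv_p (PSum P Q) = fpv_p P \<union> fpv_p Q"
| "fpv_p (PCond b P Q) = fpv_p P \<union> fpv_p Q"
| "fpv_p (PVar X) = {X}"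
| "fpv_p PNil = {}"
| "fpv_p (PFix X P) = fpv_p P - {X}"

fun fv_s :: "('c,'a,'f) sys \<Rightarrow> var set" where
  "fv_s (SProc P) = fv_p P"
| "fv_s (SActRcv c x P) = fv_p P - {x}"
| "fv_s (SPar W1 W2) = fv_s W1 \<union> fv_s W2"
| "fv_s (SRes c n v W) = fv_s W"

fun fpv_s :: "('c,'a,'f) sys \<Rightarrow> pvar set" where
  "fpv_s (SProc P) = fpv_p P"
| "fpv_s (SActRcv c x P) = fpv_p P"
| "fpv_s (SPar W1 W2) = fpv_s W1 \<union> fpv_s W2"
| "fpv_s (SRes c n v W) = fpv_s W"

definition closed_sys :: "('c,'a,'f) sys \<Rightarrow> bool" where
  "closed_sys W \<longleftrightarrow> fv_s W = {} \<and> fpv_s W = {}"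

text \<open>Substitution of a closed value w for a data variable x (no capture possible,
  since w is closed).\<close>
fun subst_e :: "'a cval \<Rightarrow> var \<Rightarrow> ('a,'f) expr \<Rightarrow> ('a,'f) expr" where
  "subst_e w x (EVal (VVar y)) = (if y = x then EVal (VC w) else EVal (VVar y))"
| "subst_e w x (EVal (VC v)) = EVal (VC v)"
| "subst_e w x (EOp f es) = EOp f (map (subst_e w x) es)"

fun subst_b :: "'a cval \<Rightarrow> var \<Rightarrow> ('c,'a,'f) bexp \<Rightarrow> ('c,'a,'f) bexp" where
  "subst_b w x (BEq e1 e2) = BEq (subst_e w x e1) (subst_e w x e2)"
| "subst_b w x (BExp c) = BExp c"

fun subst_p :: "'a cval \<Rightarrow> var \<Rightarrow> ('c,'a,'f) proc \<Rightarrow> ('c,'a,'f) proc" where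
  "subst_p w x (PSnd c e P) = PSnd c (subst_e w x e) (subst_p w x P)"
| "subst_p w x (PRcv c y P Q) =
     PRcv c y (if y = x then P else subst_p w x P) (subst_p w x Q)"
| "subst_p w x (PSleep P) = PSleep (subst_p w x P)"
| "subst_p w x (PTau P) = PTau (subst_p w x P)"
| "subst_p w x (PSum P Q) = PSum (subst_p w x P) (subst_p w x Q)"
| "subst_p w x (PCond b P Q) = PCond (subst_b w x b) (subst_p w x P) (subst_p w x Q)"
| "subst_p w x (PVar X) = PVar X"
| "subst_p w x PNil = PNil"
| "subst_p w x (PFix X P) = PFix X (subst_p w x P)"

fun psubst :: "('c,'a,'f) proc \<Rightarrow> pvar \<Rightarrow> ('c,'a,'f) proc \<Rightarrow> ('c,'a,'f) proc" where
  "psubst R X (PSnd c e P) = PSnd c e (psubst R X P)"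
| "psubst R X (PRcv c y P Q) = PRcv c y (psubst R X P) (psubst R X Q)"
| "psubst R X (PSleep P) = PSleep (psubst R X P)"
| "psubst R X (PTau P) = PTau (psubst R X P)"
| "psubst R X (PSum P Q) = PSum (psubst R X P) (psubst R X Q)"
| "psubst R X (PCond b P Q) = PCond b (psubst R X P) (psubst R X Q)"
| "psubst R X (PVar Y) = (if Y = X then R else PVar Y)"
| "psubst R X PNil = PNil"
| "psubst R X (PFix Y P) = (if Y = X then PFix Y P else PFix Y (psubst R X P))"

text \<open>ug X P: X has an unguarded free occurrence in P. Guards are broadcast prefixes,
  receiver continuations, timeout branches, sigma-prefixes and conditional branches
  (tau-prefixes and sums are not guards).\<close>
fun ug :: "pvar \<Rightarrow> ('c,'a,'f) proc \<Rightarrow> bool" where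
  "ug X (PVar Y) = (X = Y)"
| "ug X (PSum P Q) = (ug X P \<or> ug X Q)"
| "ug X (PTau P) = ug X P"
| "ug X (PFix Y P) = (X \<noteq> Y \<and> ug X P)"
| "ug X _ = False"

fun wf_p :: "('c,'a,'f) proc \<Rightarrow> bool" where
  "wf_p (PSnd c e P) = wf_p P"
| "wf_p (PRcv c x P Q) = (wf_p P \<and> wf_p Q)"
| "wf_p (PSleep P) = wf_p P"
| "wf_p (PTau P) = wf_p P"
| "wf_p (PSum P Q) = (wf_p P \<and> wf_p Q)"
| "wf_p (PCond b P Q) = (wf_p P \<and> wf_p Q)"
| "wf_p (PVar X) = True"
| "wf_p PNil = True"
| "wf_p (PFix X P) = (\<not> ug X P \<and> wf_p P)"

fun wf_s :: "('c,'a,'f) sys \<Rightarrow> bool" where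
  "wf_s (SProc P) = wf_p P"
| "wf_s (SActRcv c x P) = wf_p P"
| "wf_s (SPar W1 W2) = (wf_s W1 \<and> wf_s W2)"
| "wf_s (SRes c n v W) = wf_s W"

definition idle :: "('c,'a) env \<Rightarrow> 'c \<Rightarrow> bool" where
  "idle \<Gamma> c \<longleftrightarrow> fst (\<Gamma> c) = 0"

definition exposed :: "('c,'a) env \<Rightarrow> 'c \<Rightarrow> bool" where
  "exposed \<Gamma> c \<longleftrightarrow> \<not> idle \<Gamma> c"

text \<open>Environment update lambda(Gamma); delta is the transmission time of closed values.\<close>
fun upd :: "('a cval \<Rightarrow> nat) \<Rightarrow> ('c,'a) label \<Rightarrow> ('c,'a) env \<Rightarrow> ('c,'a) env" where
  "upd \<delta> LSigma \<Gamma> = (\<lambda>d. (max (fst (\<Gamma> d) - 1) 0, snd (\<Gamma> d)))"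
| "upd \<delta> (LOut c v) \<Gamma> = \<Gamma>(c := (if idle \<Gamma> c then (\<delta> v, v)
                                   else (max (\<delta> v) (fst (\<Gamma> c)), CErr)))"
| "upd \<delta> (LIn c v) \<Gamma> = \<Gamma>(c := (if idle \<Gamma> c then (\<delta> v, v)
                                   else (max (\<delta> v) (fst (\<Gamma> c)), CErr)))"
| "upd \<delta> LTau \<Gamma> = \<Gamma>"

fun chan_of :: "('c,'a) label \<Rightarrow> 'c option" where
  "chan_of (LOut c v) = Some c"
| "chan_of (LIn c v) = Some c"
| "chan_of _ = None"

text \<open>For a restriction nu d.W the paper assumes d different from c by
  alpha-conversion; in this named representation a bound d = c shadows c, so
  no receiver on the free channel c can occur inside.\<close>
fun rcv_p :: "('c,'a,'f) proc \<Rightarrow> 'c \<Rightarrow> bool" where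
  "rcv_p (PRcv d x P Q) c = (d = c)"
| "rcv_p (PSum P Q) c = (rcv_p P c \<or> rcv_p Q c)"
| "rcv_p (PFix X P) c = rcv_p P c"
| "rcv_p _ c = False"

fun rcv_s :: "('c,'a,'f) sys \<Rightarrow> 'c \<Rightarrow> bool" where
  "rcv_s (SProc P) c = rcv_p P c"
| "rcv_s (SActRcv d x P) c = False"
| "rcv_s (SPar W1 W2) c = (rcv_s W1 c \<or> rcv_s W2 c)"
| "rcv_s (SRes d n v W) c = (d \<noteq> c \<and> rcv_s W c)"

definition rcv_conf :: "('c,'a) env \<Rightarrow> ('c,'a,'f) sys \<Rightarrow> 'c \<Rightarrow> bool" where
  "rcv_conf \<Gamma> W c \<longleftrightarrow> idle \<Gamma> c \<and> rcv_s W c"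

fun beval :: "('f \<Rightarrow> 'a cval list \<Rightarrow> 'a cval) \<Rightarrow> ('c,'a) env \<Rightarrow> ('c,'a,'f) bexp \<Rightarrow> bool" where
  "beval I \<Gamma> (BEq e1 e2) = (eval I e1 = eval I e2)"
| "beval I \<Gamma> (BExp c) = exposed \<Gamma> c"

inductive step :: "('a cval \<Rightarrow> nat) \<Rightarrow> ('f \<Rightarrow> 'a cval list \<Rightarrow> 'a cval) \<Rightarrow> ('c,'a) env
                   \<Rightarrow> ('c,'a,'f) sys \<Rightarrow> ('c,'a) label \<Rightarrow> ('c,'a,'f) sys \<Rightarrow> bool"
  for \<delta> I where
  Snd: "eval I e = Some v \<Longrightarrow>
        step \<delta> I \<Gamma> (SProc (PSnd c e P)) (LOut c v) (SProc (sigmas (\<delta> v) P))"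
| Rcv: "idle \<Gamma> c \<Longrightarrow> step \<delta> I \<Gamma> (SProc (PRcv c x P Q)) (LIn c v) (SActRcv c x P)"
| RcvIgn: "\<not> rcv_conf \<Gamma> W c \<Longrightarrow> step \<delta> I \<Gamma> W (LIn c v) W"
| Sync1: "step \<delta> I \<Gamma> W1 (LOut c v) W1' \<Longrightarrow> step \<delta> I \<Gamma> W2 (LIn c v) W2' \<Longrightarrow>
          step \<delta> I \<Gamma> (SPar W1 W2) (LOut c v) (SPar W1' W2')"
| Sync2: "step \<delta> I \<Gamma> W1 (LIn c v) W1' \<Longrightarrow> step \<delta> I \<Gamma> W2 (LOut c v) W2' \<Longrightarrow>
          step \<delta> I \<Gamma> (SPar W1 W2) (LOut c v) (SPar W1' W2')"
| RcvPar: "step \<delta> I \<Gamma> W1 (LIn c v) W1' \<Longrightarrow> step \<delta> I \<Gamma> W2 (LIn c v) W2' \<Longrightarrow>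
          step \<delta> I \<Gamma> (SPar W1 W2) (LIn c v) (SPar W1' W2')"
| TimeNil: "step \<delta> I \<Gamma> (SProc PNil) LSigma (SProc PNil)"
| Sleep: "step \<delta> I \<Gamma> (SProc (PSleep P)) LSigma (SProc P)"
| ActRcv: "fst (\<Gamma> c) > 1 \<Longrightarrow> step \<delta> I \<Gamma> (SActRcv c x P) LSigma (SActRcv c x P)"
| EndRcv: "\<Gamma> c = (1, w) \<Longrightarrow> step \<delta> I \<Gamma> (SActRcv c x P) LSigma (SProc (subst_p w x P))"
| Timeout: "idle \<Gamma> c \<Longrightarrow> step \<delta> I \<Gamma> (SProc (PRcv c x P Q)) LSigma (SProc Q)"
| RcvLate: "exposed \<Gamma> c \<Longrightarrow>
            step \<delta> I \<Gamma> (SProc (PRcv c x P Q)) LTau (SActRcv c x (subst_p CErr x P))"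
| Tau: "step \<delta> I \<Gamma> (SProc (PTau P)) LTau (SProc P)"
| Then: "beval I \<Gamma> b \<Longrightarrow> step \<delta> I \<Gamma> (SProc (PCond b P Q)) LTau (SProc (PSleep P))"
| Else: "\<not> beval I \<Gamma> b \<Longrightarrow> step \<delta> I \<Gamma> (SProc (PCond b P Q)) LTau (SProc (PSleep Q))"
| TimePar: "step \<delta> I \<Gamma> W1 LSigma W1' \<Longrightarrow> step \<delta> I \<Gamma> W2 LSigma W2' \<Longrightarrow>
            step \<delta> I \<Gamma> (SPar W1 W2) LSigma (SPar W1' W2')"
| TauPar1: "step \<delta> I \<Gamma> W1 LTau W1' \<Longrightarrow> step \<delta> I \<Gamma> (SPar W1 W2) LTau (SPar W1' W2)"
| TauPar2: "step \<delta> I \<Gamma> W2 LTau W2' \<Longrightarrow> step \<delta> I \<Gamma> (SPar W1 W2) LTau (SPar W1 W2')"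
| Rec: "step \<delta> I \<Gamma> (SProc (psubst (PFix X P) X P)) l W \<Longrightarrow>
        step \<delta> I \<Gamma> (SProc (PFix X P)) l W"
| Sum1: "l = LTau \<or> (\<exists>c v. l = LOut c v) \<Longrightarrow> step \<delta> I \<Gamma> (SProc P) l W \<Longrightarrow>
         step \<delta> I \<Gamma> (SProc (PSum P Q)) l W"
| Sum2: "l = LTau \<or> (\<exists>c v. l = LOut c v) \<Longrightarrow> step \<delta> I \<Gamma> (SProc Q) l W \<Longrightarrow>
         step \<delta> I \<Gamma> (SProc (PSum P Q)) l W"
| SumTime: "step \<delta> I \<Gamma> (SProc P) LSigma (SProc P') \<Longrightarrow> step \<delta> I \<Gamma> (SProc Q) LSigma (SProc Q') \<Longrightarrow>
            step \<delta> I \<Gamma> (SProc (PSum P Q)) LSigma (SProc (PSum P' Q'))"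
| SumRcv1: "step \<delta> I \<Gamma> (SProc P) (LIn c v) W \<Longrightarrow> rcv_conf \<Gamma> (SProc P) c \<Longrightarrow>
            step \<delta> I \<Gamma> (SProc (PSum P Q)) (LIn c v) W"
| SumRcv2: "step \<delta> I \<Gamma> (SProc Q) (LIn c v) W \<Longrightarrow> rcv_conf \<Gamma> (SProc Q) c \<Longrightarrow>
            step \<delta> I \<Gamma> (SProc (PSum P Q)) (LIn c v) W"
| ResI: "step \<delta> I (\<Gamma>(c := (n, v))) W (LOut c w) W' \<Longrightarrow>
         step \<delta> I \<Gamma> (SRes c n v W) LTau
           (SRes c (fst (upd \<delta> (LOut c w) (\<Gamma>(c := (n, v))) c))
                   (snd (upd \<delta> (LOut c w) (\<Gamma>(c := (n, v))) c)) W')"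
| ResV: "step \<delta> I (\<Gamma>(c := (n, v))) W l W' \<Longrightarrow> chan_of l \<noteq> Some c \<Longrightarrow>
         step \<delta> I \<Gamma> (SRes c n v W) l
           (SRes c (fst (upd \<delta> l (\<Gamma>(c := (n, v))) c))
                   (snd (upd \<delta> l (\<Gamma>(c := (n, v))) c)) W')"

end

theory Submission
  imports Defs
begin

text \<open>
  The proof is a rule induction on the \<open>\<sigma>\<close>-transition, with the competing instantaneous
  transition taken apart by rule inversion.  In the base cases the term shape admits
  no urgent rule at all (\<open>0\<close>, \<open>\<sigma>.P\<close>, active receivers), or the side conditions clash
  (a timeout needs an idle channel, late reception an exposed one).  In the structural
  cases (parallel composition, sums, recursion, restriction) every urgent transition of
  the compound term is built from an urgent transition of a component, which is
  excluded by the induction hypothesis.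
\<close>

definition urgent :: "('c,'a) label \<Rightarrow> bool" where
  "urgent l \<longleftrightarrow> l = LTau \<or> (\<exists>c v. l = LOut c v)"

lemma urgent_simps [simp]:
  "urgent LTau" "urgent (LOut c v)" "\<not> urgent LSigma" "\<not> urgent (LIn c v)"
  by (auto simp: urgent_def)

inductive_cases step_ParE: "step \<delta> I \<Gamma> (SPar W1 W2) l W'"
inductive_cases step_ResE: "step \<delta> I \<Gamma> (SRes c n v W) l W'"
inductive_cases step_FixE: "step \<delta> I \<Gamma> (SProc (PFix X P)) l W'"
inductive_cases step_SumE: "step \<delta> I \<Gamma> (SProc (PSum P Q)) l W'"
inductive_cases step_RcvE: "step \<delta> I \<Gamma> (SProc (PRcv c x P Q)) l W'"
inductive_cases step_NilE: "step \<delta> I \<Gamma> (SProc PNil) l W'"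
inductive_cases step_SleepE: "step \<delta> I \<Gamma> (SProc (PSleep P)) l W'"
inductive_cases step_ActRcvE: "step \<delta> I \<Gamma> (SActRcv c x P) l W'"

text \<open>A restriction performs an urgent action only if its body does so under the
  locally updated environment: \<open>ResI\<close> turns a local broadcast into \<open>\<tau>\<close>, and \<open>ResV\<close>
  passes the label through unchanged.\<close>
lemma step_Res_urgentD:
  assumes "step \<delta> I \<Gamma> (SRes c n v W) l W'" and "urgent l"
  obtains l' W'' where "urgent l'" and "step \<delta> I (\<Gamma>(c := (n, v))) W l' W''"
  using assms by (elim step_ResE) (auto simp: urgent_def)

lemma sigma_excludes_urgent:
  assumes "step \<delta> I \<Gamma> W LSigma W1" and "urgent l"
  shows "\<not> step \<delta> I \<Gamma> W l W2"
  using assms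
proof (induction \<Gamma> W "LSigma :: ('c,'a) label" W1 arbitrary: l W2 rule: step.induct)
  case (TimeNil \<Gamma>)
  then show ?case by (auto elim: step_NilE)
next
  case (Sleep \<Gamma> P)
  then show ?case by (auto elim: step_SleepE)
next
  case (ActRcv \<Gamma> c x P)
  then show ?case by (auto elim: step_ActRcvE)
next
  case (EndRcv \<Gamma> c w x P)
  then show ?case by (auto elim: step_ActRcvE)
next
  case (Timeout \<Gamma> c x P Q)
  \<comment> \<open>the only urgent rule, late reception, needs \<open>c\<close> exposed, but the timeout needs it idle\<close>
  then show ?case by (auto elim: step_RcvE simp: exposed_def)
next
  case (TimePar \<Gamma> W1 W1' W2 W2')
  then show ?case by (auto elim: step_ParE)
next
  case (Rec \<Gamma> X P W)
  then show ?case by (auto elim: step_FixE)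
next
  case (SumTime \<Gamma> P P' Q Q')
  then show ?case by (auto elim: step_SumE)
next
  case (ResV \<Gamma> c n v W W')
  show ?case
  proof
    assume "step \<delta> I \<Gamma> (SRes c n v W) l W2"
    then obtain l' W'' where "urgent l'" and "step \<delta> I (\<Gamma>(c := (n, v))) W l' W''"
      using \<open>urgent l\<close> by (rule step_Res_urgentD)
    with ResV.hyps show False by blast
  qed
next
  \<comment> \<open>the rules for choosing a summand only apply to urgent labels, never to \<open>\<sigma>\<close>\<close>
  case Sum1
  then show ?case by simp
next
  case Sum2
  then show ?case by simp
qed

theorem mainTheorem3:
  fixes \<delta> :: "'a cval \<Rightarrow> nat"
    and I :: "'f \<Rightarrow> 'a cval list \<Rightarrow> 'a cval"
    and \<Gamma> :: "('c,'a) env"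
    and W W1 :: "('c,'a,'f) sys"
  assumes delta_pos: "\<forall>v. \<delta> v \<ge> 1"
    and closed: "closed_sys W"
    and wf: "wf_s W"
    and sig: "step \<delta> I \<Gamma> W LSigma W1"
  shows "(\<nexists>W2. step \<delta> I \<Gamma> W LTau W2) \<and> (\<forall>c v. \<nexists>W2. step \<delta> I \<Gamma> W (LOut c v) W2)"
  using sigma_excludes_urgent[OF sig] by simp

end
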